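(* Let $R$ be a finitely generated integral $\mathbb{K}$-algebra with an effective, pointed grading by a finitely generated abelian group $K$, let $(\pi,\mathrm{id}_K)\colon S=\mathbb{K}[T_1,\dots,T_r]\to R$ be a minimal presentation and $I:=\ker(\pi)$. Then every graded automorphism $(\varphi,\psi)\in\operatorname{Aut}_K(R)$ satisfies $\psi(\Omega_I)=\Omega_I$.
   Context: $\mathbb{K}$ is algebraically closed of characteristic zero. $\operatorname{Aut}_K(R)$ is the group of graded automorphisms $(\varphi,\psi)$ of $R$ ($\varphi$ algebra automorphism, $\psi\in\operatorname{Aut}(K)$, $\varphi(R_w)=R_{\psi(w)}$). Effective: the weight monoid $\omega(R)=\{w;\ R_w\ne0\}$ generates $K$; pointed: $R_0=\mathbb{K}$ and the cone in $K\otimes\mathbb{Q}$ generated by $\omega(R)$ contains no line. Minimal presentation: $K$-graded polynomial ring $S$ with homogeneous variables and graded epimorphism $(\pi,\kappa)\colon S\to R$ with $\kappa$ a group isomorphism and $\ker\pi\subseteq\langle T_1,\dots,T_r\rangle^2$. On $K$ one has the partial order $w'\le w$ iff $w-w'\in\omega(S)$ (weight monoid of $S$). For the homogeneous ideal $I$, let $I_{<w}\subseteq S$ be the ideal generated by all components $I_{w'}=I\cap S_{w'}$ with $w'<w$; the set of ideal generator degrees is $\Omega_I:=\{w\in K;\ I_w\not\subseteq I_{<w}\}$. *)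

theory Defs
  imports "HOL-Library.Poly_Mapping" "HOL-Computational_Algebra.Polynomial"
begin

definition alg_closed_field :: "'k::field itself \<Rightarrow> bool" where
  "alg_closed_field _ \<longleftrightarrow> (\<forall>p::'k poly. degree p > 0 \<longrightarrow> (\<exists>x. poly p x = 0))"

definition nmult :: "nat \<Rightarrow> 'g::ab_group_add \<Rightarrow> 'g" where
  "nmult n w = sum_list (replicate n w)"

inductive_set gen_subgroup :: "'g::ab_group_add set \<Rightarrow> 'g set" for G where
  gs_zero: "0 \<in> gen_subgroup G"
| gs_gen: "g \<in> G \<Longrightarrow> g \<in> gen_subgroup G"
| gs_add: "a \<in> gen_subgroup G \<Longrightarrow> b \<in> gen_subgroup G \<Longrightarrow> a + b \<in> gen_subgroup G"
| gs_neg: "a \<in> gen_subgroup G \<Longrightarrow> - a \<in> gen_subgroup G"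

definition fin_gen_group :: "'g::ab_group_add itself \<Rightarrow> bool" where
  "fin_gen_group _ \<longleftrightarrow> (\<exists>G::'g set. finite G \<and> gen_subgroup G = UNIV)"

definition torsion_elem :: "'g::ab_group_add \<Rightarrow> bool" where
  "torsion_elem w \<longleftrightarrow> (\<exists>n>0. nmult n w = 0)"

text \<open>The convex cone in K \<otimes> Q generated by M contains no line.  Unfolded:
  a nonnegative rational relation among the images 1 \<otimes> w (w \<in> M) vanishing in K \<otimes> Q
  must be trivial; after clearing denominators (and since 1 \<otimes> x = 0 iff x is torsion)
  this says: whenever a finite sum of elements of M (with repetitions) is torsion,
  every summand is torsion.\<close>
definition cone_pointed :: "'g::ab_group_add set \<Rightarrow> bool" where
  "cone_pointed M \<longleftrightarrow>
     (\<forall>ws. set ws \<subseteq> M \<longrightarrow> torsion_elem (sum_list ws) \<longrightarrow> (\<forall>w\<in>set ws. torsion_elem w))"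

inductive_set ideal_gen :: "'a::comm_ring_1 set \<Rightarrow> 'a set" for G where
  ig_zero: "0 \<in> ideal_gen G"
| ig_step: "g \<in> G \<Longrightarrow> y \<in> ideal_gen G \<Longrightarrow> a * g + y \<in> ideal_gen G"

definition ring_hom_fun :: "('a::comm_ring_1 \<Rightarrow> 'b::comm_ring_1) \<Rightarrow> bool" where
  "ring_hom_fun f \<longleftrightarrow> f 1 = 1 \<and> (\<forall>x y. f (x + y) = f x + f y) \<and> (\<forall>x y. f (x * y) = f x * f y)"

inductive_set subalg_gen :: "('k \<Rightarrow> 'r::comm_ring_1) \<Rightarrow> 'r set \<Rightarrow> 'r set" for alg G where
  sa_scalar: "alg c \<in> subalg_gen alg G"
| sa_gen: "g \<in> G \<Longrightarrow> g \<in> subalg_gen alg G"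
| sa_add: "a \<in> subalg_gen alg G \<Longrightarrow> b \<in> subalg_gen alg G \<Longrightarrow> a + b \<in> subalg_gen alg G"
| sa_mult: "a \<in> subalg_gen alg G \<Longrightarrow> b \<in> subalg_gen alg G \<Longrightarrow> a * b \<in> subalg_gen alg G"

definition fin_gen_algebra :: "('k \<Rightarrow> 'r::comm_ring_1) \<Rightarrow> bool" where
  "fin_gen_algebra alg \<longleftrightarrow> (\<exists>G. finite G \<and> subalg_gen alg G = UNIV)"

definition is_grading :: "('k \<Rightarrow> 'r::comm_ring_1) \<Rightarrow> ('g::ab_group_add \<Rightarrow> 'r set) \<Rightarrow> bool" where
  "is_grading alg Rw \<longleftrightarrow>
     (\<forall>w. 0 \<in> Rw w \<and> (\<forall>x\<in>Rw w. \<forall>y\<in>Rw w. x + y \<in> Rw w) \<and> (\<forall>c. \<forall>x\<in>Rw w. alg c * x \<in> Rw w)) \<and>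
     (\<forall>w w'. \<forall>x\<in>Rw w. \<forall>y\<in>Rw w'. x * y \<in> Rw (w + w')) \<and>
     (\<forall>x. \<exists>!c::'g \<Rightarrow> 'r. finite {w. c w \<noteq> 0} \<and> (\<forall>w. c w \<in> Rw w) \<and> x = (\<Sum>w\<in>{w. c w \<noteq> 0}. c w))"

definition weight_monoid :: "('g \<Rightarrow> 'r::zero set) \<Rightarrow> 'g set" where
  "weight_monoid Rw = {w. Rw w \<noteq> {0}}"

definition effective_grading :: "('g::ab_group_add \<Rightarrow> 'r::zero set) \<Rightarrow> bool" where
  "effective_grading Rw \<longleftrightarrow> gen_subgroup (weight_monoid Rw) = UNIV"

definition pointed_grading :: "('k \<Rightarrow> 'r::comm_ring_1) \<Rightarrow> ('g::ab_group_add \<Rightarrow> 'r set) \<Rightarrow> bool" where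
  "pointed_grading alg Rw \<longleftrightarrow> Rw 0 = range alg \<and> cone_pointed (weight_monoid Rw)"

definition graded_aut ::
  "('k \<Rightarrow> 'r::comm_ring_1) \<Rightarrow> ('g::ab_group_add \<Rightarrow> 'r set) \<Rightarrow> ('r \<Rightarrow> 'r) \<Rightarrow> ('g \<Rightarrow> 'g) \<Rightarrow> bool" where
  "graded_aut alg Rw \<phi> \<psi> \<longleftrightarrow>
     bij \<phi> \<and> ring_hom_fun \<phi> \<and> (\<forall>c. \<phi> (alg c) = alg c) \<and>
     bij \<psi> \<and> (\<forall>a b. \<psi> (a + b) = \<psi> a + \<psi> b) \<and>
     (\<forall>w. \<phi> ` Rw w = Rw (\<psi> w))"

type_synonym ('v, 'k) mpoly = "('v \<Rightarrow>\<^sub>0 nat) \<Rightarrow>\<^sub>0 'k"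

definition const_poly :: "'k::comm_ring_1 \<Rightarrow> ('v, 'k) mpoly" where
  "const_poly c = Poly_Mapping.single 0 c"

definition var_poly :: "'v \<Rightarrow> ('v, 'k::comm_ring_1) mpoly" where
  "var_poly v = Poly_Mapping.single (Poly_Mapping.single v 1) 1"

definition mon_deg :: "('v \<Rightarrow> 'g::ab_group_add) \<Rightarrow> ('v \<Rightarrow>\<^sub>0 nat) \<Rightarrow> 'g" where
  "mon_deg deg m = (\<Sum>v\<in>Poly_Mapping.keys m. nmult (Poly_Mapping.lookup m v) (deg v))"

definition S_comp :: "('v \<Rightarrow> 'g::ab_group_add) \<Rightarrow> 'g \<Rightarrow> ('v, 'k::comm_ring_1) mpoly set" where
  "S_comp deg w = {f. \<forall>m\<in>Poly_Mapping.keys f. mon_deg deg m = w}"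

definition deg_le :: "('v \<Rightarrow> 'g::ab_group_add) \<Rightarrow> 'k::comm_ring_1 itself \<Rightarrow> 'g \<Rightarrow> 'g \<Rightarrow> bool" where
  "deg_le deg _ w' w \<longleftrightarrow> w - w' \<in> weight_monoid (S_comp deg :: 'g \<Rightarrow> ('v, 'k) mpoly set)"

definition deg_less :: "('v \<Rightarrow> 'g::ab_group_add) \<Rightarrow> 'k::comm_ring_1 itself \<Rightarrow> 'g \<Rightarrow> 'g \<Rightarrow> bool" where
  "deg_less deg k w' w \<longleftrightarrow> deg_le deg k w' w \<and> w' \<noteq> w"

definition ideal_below :: "('v \<Rightarrow> 'g::ab_group_add) \<Rightarrow> ('v, 'k::comm_ring_1) mpoly set \<Rightarrow> 'g \<Rightarrow> ('v, 'k) mpoly set" where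
  "ideal_below deg I w = ideal_gen (\<Union>w'\<in>{w'. deg_less deg TYPE('k) w' w}. I \<inter> S_comp deg w')"

definition gen_degrees :: "('v \<Rightarrow> 'g::ab_group_add) \<Rightarrow> ('v, 'k::comm_ring_1) mpoly set \<Rightarrow> 'g set" where
  "gen_degrees deg I = {w. \<not> (I \<inter> S_comp deg w \<subseteq> ideal_below deg I w)}"

definition minimal_presentation ::
  "('k::field \<Rightarrow> 'r::comm_ring_1) \<Rightarrow> ('g::ab_group_add \<Rightarrow> 'r set) \<Rightarrow> ('v \<Rightarrow> 'g)
     \<Rightarrow> (('v, 'k) mpoly \<Rightarrow> 'r) \<Rightarrow> bool" where
  "minimal_presentation alg Rw deg \<pi> \<longleftrightarrow>
     ring_hom_fun \<pi> \<and> (\<forall>c. \<pi> (const_poly c) = alg c) \<and> surj \<pi> \<and>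
     (\<forall>w. \<pi> ` S_comp deg w \<subseteq> Rw w) \<and>
     {f. \<pi> f = 0} \<subseteq> ideal_gen {var_poly u * var_poly v | u v. True}"

end

theory Submission
  imports Defs
begin

text \<open>
  Lift \<open>\<phi>\<close> to a graded endomorphism \<open>\<Phi>\<close> of \<open>S\<close> by sending \<open>T\<^sub>v\<close> to a preimage of
  \<open>\<phi> (\<pi> T\<^sub>v)\<close> that is homogeneous of degree \<open>\<psi> (deg T\<^sub>v)\<close>, and lift \<open>\<phi>\<^sup>-\<^sup>1\<close> likewise to
  \<open>\<Phi>'\<close>. Since \<open>\<psi>\<close> maps the degrees of the variables into \<open>\<omega>(R) \<subseteq> \<omega>(S)\<close>, it respects the
  order on \<open>K\<close>, so \<open>\<Phi>\<close> maps \<open>I\<^sub><\<^sub>u\<close> into \<open>I\<^sub><\<^sub>\<psi>\<^sub>u\<close>. Now let \<open>w \<in> \<Omega>\<^sub>I\<close> and suppose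
  \<open>\<psi> w \<notin> \<Omega>\<^sub>I\<close>. For \<open>f \<in> I\<^sub>w\<close> we get \<open>\<Phi>' (\<Phi> f) \<in> I\<^sub><\<^sub>w\<close>. By minimality every monomial of
  \<open>f\<close> has total degree at least 2, and by pointedness no nonconstant monomial has degree 0, so
  every variable occurring in \<open>f\<close> has degree below \<open>w\<close>; as \<open>\<Phi>' (\<Phi> T\<^sub>v) - T\<^sub>v\<close> is a relation
  of degree \<open>deg T\<^sub>v\<close>, this gives \<open>\<Phi>' (\<Phi> f) - f \<in> I\<^sub><\<^sub>w\<close>. Hence \<open>I\<^sub>w \<subseteq> I\<^sub><\<^sub>w\<close>, a contradiction.
\<close>

lemma nmult_0 [simp]: "nmult 0 w = 0"
  by (simp add: nmult_def)

lemma nmult_Suc: "nmult (Suc n) w = w + nmult n w"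
  by (simp add: nmult_def)

lemma nmult_add: "nmult (a + b) w = nmult a w + nmult b w"
  by (simp add: nmult_def replicate_add)

lemma nmult_1 [simp]: "nmult 1 w = w" "nmult (Suc 0) w = w"
  by (simp_all add: nmult_def)

lemma (in additive) nmult: "f (nmult n w) = nmult n (f w)"
  by (induct n) (simp_all add: nmult_Suc zero add)

lemma ring_hom_fun_additive: "ring_hom_fun h \<Longrightarrow> additive h"
  unfolding ring_hom_fun_def additive_def by blast

lemma ring_hom_fun_add: "ring_hom_fun h \<Longrightarrow> h (x + y) = h x + h y"
  unfolding ring_hom_fun_def by blast

lemma ring_hom_fun_mult: "ring_hom_fun h \<Longrightarrow> h (x * y) = h x * h y"
  unfolding ring_hom_fun_def by blast

lemma ring_hom_fun_1: "ring_hom_fun h \<Longrightarrow> h 1 = 1"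
  unfolding ring_hom_fun_def by blast

lemma ring_hom_fun_0: "ring_hom_fun h \<Longrightarrow> h 0 = 0"
  by (rule additive.zero[OF ring_hom_fun_additive])

lemma ring_hom_fun_diff: "ring_hom_fun h \<Longrightarrow> h (x - y) = h x - h y"
  by (rule additive.diff[OF ring_hom_fun_additive])

lemma ring_hom_fun_minus: "ring_hom_fun h \<Longrightarrow> h (- x) = - h x"
  by (rule additive.minus[OF ring_hom_fun_additive])

lemma ring_hom_fun_sum: "ring_hom_fun h \<Longrightarrow> h (\<Sum>x\<in>A. f x) = (\<Sum>x\<in>A. h (f x))"
  by (rule additive.sum[OF ring_hom_fun_additive])

lemma ring_hom_fun_prod: "ring_hom_fun h \<Longrightarrow> h (\<Prod>x\<in>A. f x) = (\<Prod>x\<in>A. h (f x))"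
  by (induct A rule: infinite_finite_induct) (simp_all add: ring_hom_fun_1 ring_hom_fun_mult)

lemma ring_hom_fun_power: "ring_hom_fun h \<Longrightarrow> h (x ^ n) = h x ^ n"
  by (induct n) (simp_all add: ring_hom_fun_1 ring_hom_fun_mult)

lemma ring_hom_fun_comp: "ring_hom_fun h \<Longrightarrow> ring_hom_fun g \<Longrightarrow> ring_hom_fun (h \<circ> g)"
  unfolding ring_hom_fun_def by simp

lemma ring_hom_fun_inv:
  assumes "ring_hom_fun h" "bij h"
  shows "ring_hom_fun (inv h)"
proof -
  have h_inv: "h (inv h y) = y" for y
    using assms(2) by (simp add: bij_is_surj surj_f_inv_f)
  have inv_h: "inv h (h x) = x" for x
    using assms(2) by (simp add: bij_is_inj)
  have "inv h (x + y) = inv h x + inv h y" "inv h (x * y) = inv h x * inv h y" for x y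
    by (metis h_inv inv_h ring_hom_fun_add[OF assms(1)] ring_hom_fun_mult[OF assms(1)])+
  moreover have "inv h 1 = 1" by (metis inv_h ring_hom_fun_1[OF assms(1)])
  ultimately show ?thesis unfolding ring_hom_fun_def by blast
qed

lemma additive_inv:
  assumes "additive f" "bij f"
  shows "additive (inv f)"
proof
  fix x y
  have "f (inv f x + inv f y) = x + y"
    using assms by (simp add: additive.add bij_is_surj surj_f_inv_f)
  then show "inv f (x + y) = inv f x + inv f y"
    using assms(2) by (metis bij_is_inj inv_f_f)
qed

section \<open>Polynomials as finitely supported maps\<close>

lemma poly_mapping_sum_single:
  assumes "finite A" "Poly_Mapping.keys p \<subseteq> A"
  shows "p = (\<Sum>m\<in>A. Poly_Mapping.single m (Poly_Mapping.lookup p m))"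
proof (rule poly_mapping_eqI)
  fix k
  have "(\<Sum>m\<in>A. Poly_Mapping.lookup (Poly_Mapping.single m (Poly_Mapping.lookup p m)) k)
      = (\<Sum>m\<in>A. if m = k then Poly_Mapping.lookup p k else 0)"
    by (rule sum.cong) (auto simp: lookup_single)
  also have "\<dots> = Poly_Mapping.lookup p k"
    using assms by (auto simp: in_keys_iff)
  finally show "Poly_Mapping.lookup p k
      = Poly_Mapping.lookup (\<Sum>m\<in>A. Poly_Mapping.single m (Poly_Mapping.lookup p m)) k"
    by (simp add: lookup_sum)
qed

lemma poly_mapping_sum_single_keys:
  "p = (\<Sum>m\<in>Poly_Mapping.keys p. Poly_Mapping.single m (Poly_Mapping.lookup p m))"
  by (rule poly_mapping_sum_single) auto

lemma monomial_sum_single: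
  "(m::'v::finite \<Rightarrow>\<^sub>0 nat) = (\<Sum>v\<in>UNIV. Poly_Mapping.single v (Poly_Mapping.lookup m v))"
  by (rule poly_mapping_sum_single) auto

lemma single_one_neq_zero: "Poly_Mapping.single m (1::'k::zero_neq_one) \<noteq> 0"
  by (metis lookup_single_eq lookup_zero one_neq_zero)

lemma const_poly_add: "const_poly (a + b) = const_poly a + const_poly b"
  by (simp add: const_poly_def single_add)

lemma const_poly_mult: "const_poly (a * b) = const_poly a * const_poly b"
  by (simp add: const_poly_def mult_single)

lemma const_poly_1 [simp]: "const_poly 1 = 1"
  by (simp add: const_poly_def)

lemma var_poly_power:
  "(var_poly v :: ('v, 'k::comm_ring_1) mpoly) ^ k = Poly_Mapping.single (Poly_Mapping.single v k) 1"
  by (induct k) (simp_all add: var_poly_def mult_single single_add[symmetric] add.commute)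

lemma prod_single_one:
  "finite A \<Longrightarrow> (\<Prod>v\<in>A. Poly_Mapping.single (g v) (1::'k::comm_ring_1))
     = Poly_Mapping.single (\<Sum>v\<in>A. g v) 1"
  by (induct A rule: finite_induct) (simp_all add: mult_single)

lemma single_eq_const_times_monomial:
  "Poly_Mapping.single (m::'v::finite \<Rightarrow>\<^sub>0 nat) (c::'k::comm_ring_1)
     = const_poly c * (\<Prod>v\<in>UNIV. var_poly v ^ Poly_Mapping.lookup m v)"
proof -
  have "(\<Prod>v\<in>UNIV. (var_poly v :: ('v,'k) mpoly) ^ Poly_Mapping.lookup m v) = Poly_Mapping.single m 1"
    by (simp add: var_poly_power prod_single_one monomial_sum_single[symmetric])
  then show ?thesis by (simp add: const_poly_def mult_single)
qed

lemma ring_hom_fun_mpoly_eqI: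
  fixes h1 h2 :: "('v::finite, 'k::comm_ring_1) mpoly \<Rightarrow> 'r::comm_ring_1"
  assumes "ring_hom_fun h1" "ring_hom_fun h2"
    and "\<And>c. h1 (const_poly c) = h2 (const_poly c)"
    and "\<And>v. h1 (var_poly v) = h2 (var_poly v)"
  shows "h1 p = h2 p"
proof -
  have "h1 (Poly_Mapping.single m c) = h2 (Poly_Mapping.single m c)" for m c
    using assms by (simp add: single_eq_const_times_monomial ring_hom_fun_mult ring_hom_fun_prod
        ring_hom_fun_power)
  then show ?thesis
    using assms(1,2) by (subst (1 2) poly_mapping_sum_single_keys) (simp add: ring_hom_fun_sum)
qed

lemma mon_deg_eq_sum_UNIV:
  "mon_deg deg (m::'v::finite \<Rightarrow>\<^sub>0 nat) = (\<Sum>v\<in>UNIV. nmult (Poly_Mapping.lookup m v) (deg v))"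
  unfolding mon_deg_def by (rule sum.mono_neutral_left) (auto simp: in_keys_iff)

lemma mon_deg_add: "mon_deg deg ((a::'v::finite \<Rightarrow>\<^sub>0 nat) + b) = mon_deg deg a + mon_deg deg b"
  by (simp add: mon_deg_eq_sum_UNIV lookup_add nmult_add sum.distrib)

lemma mon_deg_zero [simp]: "mon_deg deg 0 = 0"
  by (simp add: mon_deg_def)

lemma mon_deg_single: "mon_deg deg (Poly_Mapping.single (v::'v::finite) k) = nmult k (deg v)"
proof -
  have "mon_deg deg (Poly_Mapping.single v k) = (\<Sum>u\<in>UNIV. if u = v then nmult k (deg v) else 0)"
    unfolding mon_deg_eq_sum_UNIV by (rule sum.cong) (auto simp: lookup_single)
  then show ?thesis by simp
qed

lemma mon_deg_range_add:
  fixes deg :: "'v::finite \<Rightarrow> 'g::ab_group_add"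
  shows "a \<in> range (mon_deg deg) \<Longrightarrow> b \<in> range (mon_deg deg) \<Longrightarrow> a + b \<in> range (mon_deg deg)"
  by (auto simp flip: mon_deg_add)

lemma mon_deg_range_zero: "0 \<in> range (mon_deg deg)"
  using rangeI[of "mon_deg deg" 0] by simp

lemma mon_deg_range_nmult:
  fixes deg :: "'v::finite \<Rightarrow> 'g::ab_group_add"
  shows "w \<in> range (mon_deg deg) \<Longrightarrow> nmult n w \<in> range (mon_deg deg)"
  by (induct n) (simp_all add: nmult_Suc mon_deg_range_zero mon_deg_range_add)

lemma mon_deg_range_sum:
  fixes deg :: "'v::finite \<Rightarrow> 'g::ab_group_add"
  shows "(\<And>x. x \<in> A \<Longrightarrow> f x \<in> range (mon_deg deg)) \<Longrightarrow> (\<Sum>x\<in>A. f x) \<in> range (mon_deg deg)"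
  by (induct A rule: infinite_finite_induct) (simp_all add: mon_deg_range_zero mon_deg_range_add)

lemma additive_mon_deg_range:
  fixes deg :: "'v::finite \<Rightarrow> 'g::ab_group_add"
  assumes "additive \<psi>" and "\<And>v. \<psi> (deg v) \<in> range (mon_deg deg)"
  shows "\<psi> (mon_deg deg m) \<in> range (mon_deg deg)"
  unfolding mon_deg_eq_sum_UNIV[of deg m] additive.sum[OF assms(1)] additive.nmult[OF assms(1)]
  by (intro mon_deg_range_sum mon_deg_range_nmult assms(2))

definition total_deg :: "('v::finite \<Rightarrow>\<^sub>0 nat) \<Rightarrow> nat" where
  "total_deg m = (\<Sum>v\<in>UNIV. Poly_Mapping.lookup m v)"

lemma total_deg_0 [simp]: "total_deg 0 = 0"
  by (simp add: total_deg_def)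

lemma total_deg_add: "total_deg (a + b) = total_deg a + total_deg b"
  by (simp add: total_deg_def lookup_add sum.distrib)

lemma total_deg_single: "total_deg (Poly_Mapping.single v k) = k"
proof -
  have "total_deg (Poly_Mapping.single v k) = (\<Sum>u\<in>UNIV. if u = v then k else 0)"
    unfolding total_deg_def by (rule sum.cong) (auto simp: lookup_single)
  then show ?thesis by simp
qed

lemma S_comp_zero [simp]: "0 \<in> S_comp deg w"
  by (simp add: S_comp_def)

lemma S_comp_add: "p \<in> S_comp deg w \<Longrightarrow> q \<in> S_comp deg w \<Longrightarrow> p + q \<in> S_comp deg w"
  unfolding S_comp_def using keys_add[of p q] by auto

lemma S_comp_diff: "p \<in> S_comp deg w \<Longrightarrow> q \<in> S_comp deg w \<Longrightarrow> p - q \<in> S_comp deg w"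
  unfolding S_comp_def using keys_diff[of p q] by auto

lemma S_comp_sum: "(\<And>x. x \<in> A \<Longrightarrow> f x \<in> S_comp deg w) \<Longrightarrow> (\<Sum>x\<in>A. f x) \<in> S_comp deg w"
  by (induct A rule: infinite_finite_induct) (simp_all add: S_comp_add)

lemma S_comp_mult:
  fixes p q :: "('v::finite, 'k::comm_ring_1) mpoly"
  assumes "p \<in> S_comp deg w" "q \<in> S_comp deg w'"
  shows "p * q \<in> S_comp deg (w + w')"
  unfolding S_comp_def mem_Collect_eq
proof (intro ballI)
  fix m assume "m \<in> Poly_Mapping.keys (p * q)"
  then obtain a b where "m = a + b" "a \<in> Poly_Mapping.keys p" "b \<in> Poly_Mapping.keys q"
    using keys_mult by blast
  then show "mon_deg deg m = w + w'" using assms by (simp add: S_comp_def mon_deg_add)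
qed

lemma S_comp_one: "(1::('v::finite, 'k::comm_ring_1) mpoly) \<in> S_comp deg 0"
  by (simp add: S_comp_def)

lemma S_comp_power:
  fixes p :: "('v::finite, 'k::comm_ring_1) mpoly"
  shows "p \<in> S_comp deg w \<Longrightarrow> p ^ n \<in> S_comp deg (nmult n w)"
  by (induct n) (simp_all add: S_comp_one nmult_Suc S_comp_mult)

lemma S_comp_prod:
  fixes f :: "'a \<Rightarrow> ('v::finite, 'k::comm_ring_1) mpoly"
  shows "finite A \<Longrightarrow> (\<And>x. x \<in> A \<Longrightarrow> f x \<in> S_comp deg (g x))
    \<Longrightarrow> (\<Prod>x\<in>A. f x) \<in> S_comp deg (\<Sum>x\<in>A. g x)"
  by (induct A rule: finite_induct) (simp_all add: S_comp_one S_comp_mult)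

lemma const_poly_in_S_comp: "(const_poly c :: ('v::finite, 'k::comm_ring_1) mpoly) \<in> S_comp deg 0"
  by (simp add: S_comp_def const_poly_def)

lemma var_poly_in_S_comp: "(var_poly v :: ('v::finite, 'k::comm_ring_1) mpoly) \<in> S_comp deg (deg v)"
  by (simp add: S_comp_def var_poly_def mon_deg_single)

lemma weight_monoid_S_comp:
  "weight_monoid (S_comp deg :: 'g::ab_group_add \<Rightarrow> ('v::finite, 'k::comm_ring_1) mpoly set)
     = range (mon_deg deg)"
proof (intro set_eqI iffI)
  fix w assume "w \<in> weight_monoid (S_comp deg :: 'g \<Rightarrow> ('v, 'k) mpoly set)"
  then obtain p :: "('v, 'k) mpoly" where "p \<in> S_comp deg w" "p \<noteq> 0"
    unfolding weight_monoid_def using S_comp_zero by blast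
  moreover obtain m where "m \<in> Poly_Mapping.keys p"
    using \<open>p \<noteq> 0\<close> keys_eq_empty by blast
  ultimately show "w \<in> range (mon_deg deg)"
    by (auto simp: S_comp_def)
next
  fix w assume "w \<in> range (mon_deg deg)"
  then obtain m where "mon_deg deg m = w" by blast
  then have "Poly_Mapping.single m (1::'k) \<in> S_comp deg w" "Poly_Mapping.single m (1::'k) \<noteq> 0"
    by (simp_all add: S_comp_def single_one_neq_zero)
  then show "w \<in> weight_monoid (S_comp deg :: 'g \<Rightarrow> ('v, 'k) mpoly set)"
    unfolding weight_monoid_def by blast
qed

lemma deg_less_iff:
  "deg_less (deg :: 'v::finite \<Rightarrow> 'g::ab_group_add) TYPE('k::comm_ring_1) w' w
     \<longleftrightarrow> w - w' \<in> range (mon_deg deg) \<and> w' \<noteq> w"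
  unfolding deg_less_def deg_le_def weight_monoid_S_comp by simp

definition hom_comp ::
  "('v::finite \<Rightarrow> 'g::ab_group_add) \<Rightarrow> 'g \<Rightarrow> ('v, 'k::comm_ring_1) mpoly \<Rightarrow> ('v, 'k) mpoly" where
  "hom_comp deg w p = (\<Sum>m\<in>{m \<in> Poly_Mapping.keys p. mon_deg deg m = w}.
      Poly_Mapping.single m (Poly_Mapping.lookup p m))"

lemma hom_comp_in_S_comp: "hom_comp deg w p \<in> S_comp deg w"
  unfolding hom_comp_def by (rule S_comp_sum) (auto simp: S_comp_def)

lemma sum_hom_comp: "p = (\<Sum>w\<in>mon_deg deg ` Poly_Mapping.keys p. hom_comp deg w p)"
  unfolding hom_comp_def
  by (subst sum.group[where g = "mon_deg deg" and S = "Poly_Mapping.keys p"])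
    (auto intro: poly_mapping_sum_single_keys)

lemma hom_comp_eq_0: "w \<notin> mon_deg deg ` Poly_Mapping.keys p \<Longrightarrow> hom_comp deg w p = 0"
  unfolding hom_comp_def by (rule sum.neutral) auto

section \<open>Ideals\<close>

lemma ideal_gen_add: "x \<in> ideal_gen G \<Longrightarrow> y \<in> ideal_gen G \<Longrightarrow> x + y \<in> ideal_gen G"
proof (induct x rule: ideal_gen.induct)
  case ig_zero then show ?case by simp
next
  case (ig_step g z a)
  then have "a * g + (z + y) \<in> ideal_gen G" by (simp add: ideal_gen.ig_step)
  then show ?case by (simp add: add.assoc)
qed

lemma ideal_gen_mult: "x \<in> ideal_gen G \<Longrightarrow> b * x \<in> ideal_gen G"
proof (induct x rule: ideal_gen.induct)
  case ig_zero then show ?case by (simp add: ideal_gen.ig_zero)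
next
  case (ig_step g z a)
  then have "(b * a) * g + b * z \<in> ideal_gen G" by (simp add: ideal_gen.ig_step)
  then show ?case by (simp add: algebra_simps)
qed

lemma ideal_gen_generator: "g \<in> G \<Longrightarrow> g \<in> ideal_gen G"
  using ideal_gen.ig_step[of g G 0 1] by (simp add: ideal_gen.ig_zero)

lemma ideal_gen_diff: "x \<in> ideal_gen G \<Longrightarrow> y \<in> ideal_gen G \<Longrightarrow> x - y \<in> ideal_gen G"
  using ideal_gen_add ideal_gen_mult[of y G "-1"] by (metis diff_conv_add_uminus mult_minus1)

lemma ideal_gen_sum: "(\<And>x. x \<in> A \<Longrightarrow> f x \<in> ideal_gen G) \<Longrightarrow> (\<Sum>x\<in>A. f x) \<in> ideal_gen G"
  by (induct A rule: infinite_finite_induct) (simp_all add: ideal_gen.ig_zero ideal_gen_add)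

lemma ring_hom_fun_image_ideal_gen:
  assumes "ring_hom_fun h" "h ` G \<subseteq> H" "x \<in> ideal_gen G"
  shows "h x \<in> ideal_gen H"
  using assms(3)
proof (induct x rule: ideal_gen.induct)
  case ig_zero then show ?case by (simp add: ring_hom_fun_0[OF assms(1)] ideal_gen.ig_zero)
next
  case (ig_step g y a)
  then have "h a * h g + h y \<in> ideal_gen H" using assms(2) by (blast intro: ideal_gen.ig_step)
  then show ?case by (simp add: ring_hom_fun_add[OF assms(1)] ring_hom_fun_mult[OF assms(1)])
qed

lemma ring_hom_fun_diff_mult:
  assumes "ring_hom_fun h" "h a - a \<in> ideal_gen G" "h b - b \<in> ideal_gen G"
  shows "h (a * b) - a * b \<in> ideal_gen G"
proof -
  have "h (a * b) - a * b = h a * (h b - b) + b * (h a - a)"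
    by (simp add: ring_hom_fun_mult[OF assms(1)] algebra_simps)
  then show ?thesis using assms by (metis ideal_gen_add ideal_gen_mult)
qed

lemma ring_hom_fun_diff_power:
  assumes "ring_hom_fun h" "h a - a \<in> ideal_gen G"
  shows "h (a ^ n) - a ^ n \<in> ideal_gen G"
  by (induct n) (simp_all add: ring_hom_fun_1[OF assms(1)] ideal_gen.ig_zero
      ring_hom_fun_diff_mult[OF assms])

lemma ring_hom_fun_diff_prod:
  assumes "ring_hom_fun h" "finite A" "\<And>x. x \<in> A \<Longrightarrow> h (f x) - f x \<in> ideal_gen G"
  shows "h (\<Prod>x\<in>A. f x) - (\<Prod>x\<in>A. f x) \<in> ideal_gen G"
  using assms(2,3)
  by (induct A rule: finite_induct) (simp_all add: ring_hom_fun_1[OF assms(1)] ideal_gen.ig_zero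
      ring_hom_fun_diff_mult[OF assms(1)])

lemma ring_hom_fun_diff_mpoly:
  fixes h :: "('v::finite, 'k::comm_ring_1) mpoly \<Rightarrow> ('v, 'k) mpoly"
  assumes h: "ring_hom_fun h" and const: "\<And>c. h (const_poly c) = const_poly c"
    and var: "\<And>v. v \<in> V \<Longrightarrow> h (var_poly v) - var_poly v \<in> ideal_gen G"
    and vars: "\<forall>m\<in>Poly_Mapping.keys p. \<forall>v. Poly_Mapping.lookup m v \<noteq> 0 \<longrightarrow> v \<in> V"
  shows "h p - p \<in> ideal_gen G"
proof -
  have "h p - p = (\<Sum>m\<in>Poly_Mapping.keys p. h (Poly_Mapping.single m (Poly_Mapping.lookup p m))
      - Poly_Mapping.single m (Poly_Mapping.lookup p m))"
    by (subst (1 2) poly_mapping_sum_single_keys) (simp add: ring_hom_fun_sum[OF h] sum_subtractf)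
  also have "\<dots> \<in> ideal_gen G"
  proof (rule ideal_gen_sum)
    fix m assume m: "m \<in> Poly_Mapping.keys p"
    define X where "X = (\<Prod>v\<in>UNIV. (var_poly v :: ('v, 'k) mpoly) ^ Poly_Mapping.lookup m v)"
    have "h X - X \<in> ideal_gen G"
      unfolding X_def
    proof (rule ring_hom_fun_diff_prod[OF h])
      fix v :: 'v
      show "h (var_poly v ^ Poly_Mapping.lookup m v) - var_poly v ^ Poly_Mapping.lookup m v
          \<in> ideal_gen G"
        using vars m var ring_hom_fun_diff_power[OF h]
        by (cases "Poly_Mapping.lookup m v = 0") (auto simp: ring_hom_fun_1[OF h] ideal_gen.ig_zero)
    qed simp
    then have "const_poly (Poly_Mapping.lookup p m) * (h X - X) \<in> ideal_gen G"
      by (rule ideal_gen_mult)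
    then show "h (Poly_Mapping.single m (Poly_Mapping.lookup p m))
        - Poly_Mapping.single m (Poly_Mapping.lookup p m) \<in> ideal_gen G"
      by (simp add: single_eq_const_times_monomial X_def[symmetric] ring_hom_fun_mult[OF h] const
          algebra_simps)
  qed
  finally show ?thesis .
qed

abbreviation sq_var_ideal :: "('v, 'k::comm_ring_1) mpoly set" where
  "sq_var_ideal \<equiv> ideal_gen {var_poly u * var_poly v | u v. True}"

lemma sq_var_ideal_total_deg:
  assumes "(q::('v::finite, 'k::comm_ring_1) mpoly) \<in> sq_var_ideal" "m \<in> Poly_Mapping.keys q"
  shows "2 \<le> total_deg m"
  using assms
proof (induct q arbitrary: m rule: ideal_gen.induct)
  case ig_zero then show ?case by simp
next
  case (ig_step g y a)
  from ig_step(1) obtain u v where g: "g = var_poly u * var_poly v" by blast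
  have "2 \<le> total_deg m" if "m \<in> Poly_Mapping.keys (a * g)"
  proof -
    obtain m1 m2 where "m = m1 + m2" "m2 \<in> Poly_Mapping.keys g"
      using \<open>m \<in> Poly_Mapping.keys (a * g)\<close> keys_mult[of a g] by blast
    then show ?thesis by (auto simp: g var_poly_def mult_single total_deg_add total_deg_single)
  qed
  then show ?case using ig_step keys_add[of "a * g" y] by auto
qed

lemma var_minus_const_notin_sq_var_ideal:
  "(var_poly v :: ('v::finite, 'k::comm_ring_1) mpoly) - const_poly c \<notin> sq_var_ideal"
proof
  assume "var_poly v - const_poly c \<in> (sq_var_ideal :: ('v, 'k) mpoly set)"
  moreover have "Poly_Mapping.single v 1 \<in> Poly_Mapping.keys (var_poly v - const_poly c :: ('v, 'k) mpoly)"
    using single_one_neq_zero[of v, where 'k = nat]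
    by (simp add: One_nat_def in_keys_iff var_poly_def const_poly_def lookup_minus lookup_single when_def)
  ultimately have "2 \<le> total_deg (Poly_Mapping.single v (1::nat))"
    by (rule sq_var_ideal_total_deg)
  then show False by (simp only: total_deg_single)
qed

section \<open>Substitution of polynomials for the variables\<close>

definition subst_monom ::
  "('v::finite \<Rightarrow> ('v, 'k::comm_ring_1) mpoly) \<Rightarrow> ('v \<Rightarrow>\<^sub>0 nat) \<Rightarrow> ('v, 'k) mpoly" where
  "subst_monom F m = (\<Prod>v\<in>UNIV. F v ^ Poly_Mapping.lookup m v)"

definition subst_mpoly ::
  "('v::finite \<Rightarrow> ('v, 'k::comm_ring_1) mpoly) \<Rightarrow> ('v, 'k) mpoly \<Rightarrow> ('v, 'k) mpoly" where
  "subst_mpoly F p = (\<Sum>m\<in>Poly_Mapping.keys p. const_poly (Poly_Mapping.lookup p m) * subst_monom F m)"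

lemma subst_monom_add: "subst_monom F (a + b) = subst_monom F a * subst_monom F b"
  by (simp add: subst_monom_def lookup_add power_add prod.distrib)

lemma subst_monom_0 [simp]: "subst_monom F 0 = 1"
  by (simp add: subst_monom_def)

lemma subst_monom_var: "subst_monom F (Poly_Mapping.single v 1) = F v"
proof -
  have "subst_monom F (Poly_Mapping.single v 1) = (\<Prod>u\<in>UNIV. if u = v then F v else 1)"
    unfolding subst_monom_def by (rule prod.cong) (auto simp: lookup_single)
  then show ?thesis by simp
qed

lemma subst_mpoly_superset:
  assumes "finite A" "Poly_Mapping.keys p \<subseteq> A"
  shows "subst_mpoly F p = (\<Sum>m\<in>A. const_poly (Poly_Mapping.lookup p m) * subst_monom F m)"
  unfolding subst_mpoly_def
  by (rule sum.mono_neutral_left) (use assms in \<open>auto simp: in_keys_iff const_poly_def\<close>)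

lemma subst_mpoly_0 [simp]: "subst_mpoly F 0 = 0"
  by (simp add: subst_mpoly_def)

lemma subst_mpoly_1: "subst_mpoly F 1 = 1"
  by (simp add: subst_mpoly_def)

lemma subst_mpoly_add: "subst_mpoly F (p + q) = subst_mpoly F p + subst_mpoly F q"
proof -
  let ?A = "Poly_Mapping.keys p \<union> Poly_Mapping.keys q"
  have "subst_mpoly F (p + q)
      = (\<Sum>m\<in>?A. const_poly (Poly_Mapping.lookup (p + q) m) * subst_monom F m)"
    by (rule subst_mpoly_superset) (auto dest: subsetD[OF keys_add])
  also have "\<dots> = (\<Sum>m\<in>?A. const_poly (Poly_Mapping.lookup p m) * subst_monom F m)
                 + (\<Sum>m\<in>?A. const_poly (Poly_Mapping.lookup q m) * subst_monom F m)"
    by (simp add: lookup_add const_poly_add distrib_right sum.distrib)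
  also have "\<dots> = subst_mpoly F p + subst_mpoly F q"
    by (simp add: subst_mpoly_superset[symmetric])
  finally show ?thesis .
qed

lemma subst_mpoly_sum: "subst_mpoly F (\<Sum>x\<in>A. f x) = (\<Sum>x\<in>A. subst_mpoly F (f x))"
  by (induct A rule: infinite_finite_induct) (simp_all add: subst_mpoly_add)

lemma subst_mpoly_single: "subst_mpoly F (Poly_Mapping.single m c) = const_poly c * subst_monom F m"
  by (cases "c = 0") (simp_all add: subst_mpoly_def const_poly_def)

lemma subst_mpoly_mult: "subst_mpoly F (p * q) = subst_mpoly F p * subst_mpoly F q"
proof -
  have pq: "p * q = (\<Sum>a\<in>Poly_Mapping.keys p. \<Sum>b\<in>Poly_Mapping.keys q.
      Poly_Mapping.single (a + b) (Poly_Mapping.lookup p a * Poly_Mapping.lookup q b))"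
    by (subst (1 2) poly_mapping_sum_single_keys) (simp add: sum_product mult_single)
  have "subst_mpoly F (p * q) = (\<Sum>a\<in>Poly_Mapping.keys p. \<Sum>b\<in>Poly_Mapping.keys q.
      (const_poly (Poly_Mapping.lookup p a) * subst_monom F a)
        * (const_poly (Poly_Mapping.lookup q b) * subst_monom F b))"
    by (simp add: pq subst_mpoly_sum subst_mpoly_single const_poly_mult subst_monom_add algebra_simps)
  also have "\<dots> = subst_mpoly F p * subst_mpoly F q"
    by (simp add: subst_mpoly_def sum_product)
  finally show ?thesis .
qed

lemma ring_hom_fun_subst_mpoly: "ring_hom_fun (subst_mpoly F)"
  by (simp add: ring_hom_fun_def subst_mpoly_1 subst_mpoly_add subst_mpoly_mult)

lemma subst_mpoly_const: "subst_mpoly F (const_poly c) = const_poly c"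
  by (simp add: const_poly_def subst_mpoly_single[unfolded const_poly_def] subst_monom_def)

lemma subst_mpoly_var: "subst_mpoly F (var_poly v) = F v"
  using subst_monom_var[of F v] by (simp add: var_poly_def subst_mpoly_single)

lemma subst_mpoly_S_comp:
  fixes deg :: "'v::finite \<Rightarrow> 'g::ab_group_add" and F :: "'v \<Rightarrow> ('v, 'k::comm_ring_1) mpoly"
  assumes \<psi>: "additive \<psi>" and F: "\<And>v. F v \<in> S_comp deg (\<psi> (deg v))"
    and p: "p \<in> S_comp deg w"
  shows "subst_mpoly F p \<in> S_comp deg (\<psi> w)"
  unfolding subst_mpoly_def
proof (rule S_comp_sum)
  fix m assume m: "m \<in> Poly_Mapping.keys p"
  have "subst_monom F m \<in> S_comp deg (\<Sum>v\<in>UNIV. nmult (Poly_Mapping.lookup m v) (\<psi> (deg v)))"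
    unfolding subst_monom_def by (rule S_comp_prod) (auto intro: S_comp_power F)
  moreover have "mon_deg deg m = w"
    using p m by (simp add: S_comp_def)
  then have "(\<Sum>v\<in>UNIV. nmult (Poly_Mapping.lookup m v) (\<psi> (deg v))) = \<psi> w"
    by (auto simp: mon_deg_eq_sum_UNIV additive.sum[OF \<psi>] additive.nmult[OF \<psi>])
  ultimately show "const_poly (Poly_Mapping.lookup p m) * subst_monom F m \<in> S_comp deg (\<psi> w)"
    using S_comp_mult[OF const_poly_in_S_comp] by fastforce
qed

section \<open>Scalars over an algebraically closed field\<close>

lemma map_poly_add_ring_hom_fun:
  "ring_hom_fun f \<Longrightarrow> map_poly f (p + q) = map_poly f p + map_poly f q"
  by (intro poly_eqI) (simp add: coeff_map_poly ring_hom_fun_0 ring_hom_fun_add)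

lemma alg_closed_root_in_range:
  fixes alg :: "'k::field \<Rightarrow> 'r::idom"
  assumes acf: "alg_closed_field TYPE('k)" and alg: "ring_hom_fun alg"
  shows "P \<noteq> 0 \<Longrightarrow> poly (map_poly alg P) x = 0 \<Longrightarrow> x \<in> range alg"
proof (induct "degree P" arbitrary: P rule: less_induct)
  case less
  have alg_0: "alg 0 = 0" by (rule ring_hom_fun_0[OF alg])
  show ?case
  proof (cases "degree P = 0")
    case True
    then obtain a where P: "P = [:a:]" by (metis degree_eq_zeroE)
    with less have "a \<noteq> 0" by simp
    then have "alg a * alg (inverse a) = 1"
      by (simp flip: ring_hom_fun_mult[OF alg] add: ring_hom_fun_1[OF alg])
    then have "alg a \<noteq> 0" by auto
    then show ?thesis using less by (simp add: P map_poly_pCons alg_0)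
  next
    case False
    then obtain z where "poly P z = 0" using acf unfolding alg_closed_field_def by blast
    then obtain Q where PQ: "P = [:- z, 1:] * Q" by (metis dvdE poly_eq_0_iff_dvd)
    with less have "Q \<noteq> 0" by auto
    then have "degree P = Suc (degree Q)" unfolding PQ by (subst degree_mult_eq) auto
    have "P = smult (- z) Q + pCons 0 Q" using PQ by simp
    then have "map_poly alg P = smult (alg (- z)) (map_poly alg Q) + pCons 0 (map_poly alg Q)"
      using map_poly_add_ring_hom_fun[OF alg] map_poly_smult[of alg, OF alg_0 ring_hom_fun_mult[OF alg]]
        map_poly_pCons[of alg, OF alg_0] alg_0
      by metis
    then have "poly (map_poly alg P) x = alg (- z) * poly (map_poly alg Q) x + x * poly (map_poly alg Q) x"
      by simp
    then have "(x - alg z) * poly (map_poly alg Q) x = 0"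
      using less(3) by (auto simp: ring_hom_fun_minus[OF alg] algebra_simps)
    then show ?thesis
      using less(1)[OF _ \<open>Q \<noteq> 0\<close>] \<open>degree P = Suc (degree Q)\<close> by auto
  qed
qed

lemma alg_closed_power_in_range:
  fixes alg :: "'k::field \<Rightarrow> 'r::idom"
  assumes acf: "alg_closed_field TYPE('k)" and alg: "ring_hom_fun alg"
    and "n > 0" and "x ^ n = alg c"
  shows "x \<in> range alg"
proof -
  define P where "P = [:- c:] + monom 1 n"
  have "degree P = n" unfolding P_def
    by (subst add.commute, subst degree_add_eq_left) (use \<open>n > 0\<close> in \<open>auto simp: degree_monom_eq\<close>)
  then have "P \<noteq> 0" using \<open>n > 0\<close> by auto
  have "map_poly alg P = [:alg (- c):] + monom 1 n"
    unfolding P_def map_poly_add_ring_hom_fun[OF alg]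
    by (simp add: map_poly_pCons ring_hom_fun_0[OF alg] map_poly_monom ring_hom_fun_1[OF alg])
  then have "poly (map_poly alg P) x = 0"
    using assms(4) by (simp add: poly_monom ring_hom_fun_minus[OF alg])
  then show ?thesis by (rule alg_closed_root_in_range[OF acf alg \<open>P \<noteq> 0\<close>])
qed

lemma graded_aut_additive: "graded_aut alg Rw \<phi> \<psi> \<Longrightarrow> additive \<psi>"
  unfolding graded_aut_def additive_def by blast

lemma graded_aut_inv:
  assumes "graded_aut alg Rw \<phi> \<psi>"
  shows "graded_aut alg Rw (inv \<phi>) (inv \<psi>)"
proof -
  have \<phi>: "bij \<phi>" "ring_hom_fun \<phi>" "\<forall>c. \<phi> (alg c) = alg c"
    and \<psi>: "bij \<psi>" "additive \<psi>" and im: "\<forall>w. \<phi> ` Rw w = Rw (\<psi> w)"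
    using assms graded_aut_additive unfolding graded_aut_def by blast+
  have "inv \<phi> (alg c) = alg c" for c
    using \<phi>(1,3) by (metis bij_is_inj inv_f_f)
  moreover have "inv \<phi> ` Rw w = Rw (inv \<psi> w)" for w
  proof -
    have "Rw w = \<phi> ` Rw (inv \<psi> w)"
      using im \<psi>(1) by (simp add: bij_is_surj surj_f_inv_f)
    then show ?thesis
      using \<phi>(1) by (simp add: bij_is_inj image_inv_f_f)
  qed
  moreover have "\<forall>a b. inv \<psi> (a + b) = inv \<psi> a + inv \<psi> b"
    using additive_inv[OF \<psi>(2,1)] unfolding additive_def by blast
  ultimately show ?thesis
    using \<phi>(1,2) \<psi>(1) unfolding graded_aut_def by (simp add: ring_hom_fun_inv bij_imp_bij_inv)
qed

section \<open>Graded algebras and their minimal presentations\<close>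

locale graded_algebra =
  fixes alg :: "'k::field \<Rightarrow> 'r::idom" and Rw :: "'g::ab_group_add \<Rightarrow> 'r set"
  assumes alg_hom: "ring_hom_fun alg" and grading: "is_grading alg Rw"
begin

lemma zero_in_component: "0 \<in> Rw w"
  using grading unfolding is_grading_def by blast

lemma component_mult: "x \<in> Rw w \<Longrightarrow> y \<in> Rw w' \<Longrightarrow> x * y \<in> Rw (w + w')"
  using grading unfolding is_grading_def by blast

lemma homogeneous_decomposition_unique:
  assumes A: "finite A" "\<forall>w\<in>A. c w \<in> Rw w" and B: "finite B" "\<forall>w\<in>B. d w \<in> Rw w"
    and eq: "(\<Sum>w\<in>A. c w) = (\<Sum>w\<in>B. d w)"
  shows "(if u \<in> A then c u else 0) = (if u \<in> B then d u else 0)"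
proof -
  define x where "x = (\<Sum>w\<in>A. c w)"
  define decomposes where "decomposes e \<longleftrightarrow> finite {w. e w \<noteq> 0} \<and> (\<forall>w. e w \<in> Rw w)
    \<and> x = (\<Sum>w\<in>{w. e w \<noteq> 0}. e w)" for e :: "'g \<Rightarrow> 'r"
  have "\<forall>x. \<exists>!e::'g \<Rightarrow> 'r. finite {w. e w \<noteq> 0} \<and> (\<forall>w. e w \<in> Rw w) \<and> x = (\<Sum>w\<in>{w. e w \<noteq> 0}. e w)"
    using grading unfolding is_grading_def by (elim conjE)
  then have "\<exists>!e. decomposes e" unfolding decomposes_def by (rule spec)
  then obtain e where unique: "\<And>e'. decomposes e' \<Longrightarrow> e' = e" by (auto simp: Ex1_def)
  have extend: "decomposes (\<lambda>w. if w \<in> S then f w else 0)"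
    if S: "finite S" "\<forall>w\<in>S. f w \<in> Rw w" "x = (\<Sum>w\<in>S. f w)" for S f
    unfolding decomposes_def
  proof (intro conjI allI)
    show "finite {w. (if w \<in> S then f w else 0) \<noteq> 0}"
      using S(1) by (rule finite_subset[rotated]) auto
    show "(if w \<in> S then f w else 0) \<in> Rw w" for w
      using S(2) zero_in_component by auto
    have "(\<Sum>w\<in>{w. (if w \<in> S then f w else 0) \<noteq> 0}. if w \<in> S then f w else 0)
        = (\<Sum>w\<in>S. if w \<in> S then f w else 0)"
      by (rule sum.mono_neutral_left) (use S(1) in auto)
    then show "x = (\<Sum>w\<in>{w. (if w \<in> S then f w else 0) \<noteq> 0}. if w \<in> S then f w else 0)"
      using S(3) by simp
  qed
  have "(\<lambda>w. if w \<in> A then c w else 0) = (\<lambda>w. if w \<in> B then d w else 0)"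
    using unique[OF extend[OF A]] unique[OF extend[OF B]] eq by (simp add: x_def)
  then show ?thesis by metis
qed

lemma homogeneous_degree_unique: "x \<noteq> 0 \<Longrightarrow> x \<in> Rw u \<Longrightarrow> x \<in> Rw u' \<Longrightarrow> u = u'"
  using homogeneous_decomposition_unique[of "{u}" "\<lambda>_. x" "{u'}" "\<lambda>_. x" u]
  by (auto split: if_splits)

end

locale minimal_graded_presentation = graded_algebra alg Rw
  for alg :: "'k::field \<Rightarrow> 'r::idom" and Rw :: "'g::ab_group_add \<Rightarrow> 'r set" +
  fixes deg :: "'v::finite \<Rightarrow> 'g" and \<pi> :: "('v, 'k) mpoly \<Rightarrow> 'r"
  assumes alg_closed: "alg_closed_field TYPE('k)"
    and pointed: "pointed_grading alg Rw"
    and minimal: "minimal_presentation alg Rw deg \<pi>"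
begin

lemma component_0: "Rw 0 = range alg"
  using pointed unfolding pointed_grading_def by blast

lemma \<pi>_ring_hom: "ring_hom_fun \<pi>"
  using minimal unfolding minimal_presentation_def by blast

lemma \<pi>_const: "\<pi> (const_poly c) = alg c"
  using minimal unfolding minimal_presentation_def by blast

lemma \<pi>_surj: "surj \<pi>"
  using minimal unfolding minimal_presentation_def by blast

lemma \<pi>_S_comp: "p \<in> S_comp deg w \<Longrightarrow> \<pi> p \<in> Rw w"
  using minimal unfolding minimal_presentation_def by blast

lemma kernel_in_sq_var_ideal: "\<pi> f = 0 \<Longrightarrow> f \<in> sq_var_ideal"
  using minimal unfolding minimal_presentation_def by blast

lemma power_in_component: "x \<in> Rw w \<Longrightarrow> x ^ n \<in> Rw (nmult n w)"
proof (induct n)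
  case 0 then show ?case using component_0 ring_hom_fun_1[OF alg_hom] by (metis nmult_0 power_0 rangeI)
next
  case (Suc n) then show ?case using component_mult by (simp add: nmult_Suc)
qed

lemma torsion_degree_eq_0:
  assumes "x \<in> Rw w" "x \<noteq> 0" "torsion_elem w"
  shows "w = 0"
proof -
  obtain n where "n > 0" "nmult n w = 0" using assms(3) unfolding torsion_elem_def by blast
  then obtain c where "x ^ n = alg c"
    using power_in_component[OF assms(1), of n] component_0 by auto
  then have "x \<in> Rw 0"
    using alg_closed_power_in_range[OF alg_closed alg_hom \<open>n > 0\<close>] component_0 by simp
  then show ?thesis using homogeneous_degree_unique[OF assms(2,1)] by simp
qed

lemma \<pi>_hom_comp:
  assumes "\<pi> p \<in> Rw u"
  shows "\<pi> (hom_comp deg u p) = \<pi> p"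
proof -
  let ?W = "mon_deg deg ` Poly_Mapping.keys p"
  have "(\<Sum>w\<in>?W. \<pi> (hom_comp deg w p)) = (\<Sum>w\<in>{u}. \<pi> p)"
    by (subst (2) sum_hom_comp[of p deg]) (simp add: ring_hom_fun_sum[OF \<pi>_ring_hom])
  moreover have "\<forall>w\<in>?W. \<pi> (hom_comp deg w p) \<in> Rw w"
    using \<pi>_S_comp hom_comp_in_S_comp by blast
  ultimately have "(if u \<in> ?W then \<pi> (hom_comp deg u p) else 0) = \<pi> p"
    using homogeneous_decomposition_unique[of ?W "\<lambda>w. \<pi> (hom_comp deg w p)" "{u}" "\<lambda>_. \<pi> p" u]
      assms by simp
  then show ?thesis using hom_comp_eq_0[of u deg p] ring_hom_fun_0[OF \<pi>_ring_hom]
    by (auto split: if_splits)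
qed

lemma weight_monoid_subset_mon_deg_range: "weight_monoid Rw \<subseteq> range (mon_deg deg)"
proof
  fix w assume "w \<in> weight_monoid Rw"
  then obtain y where y: "y \<in> Rw w" "y \<noteq> 0"
    unfolding weight_monoid_def using zero_in_component by blast
  obtain p where "\<pi> p = y" using \<pi>_surj by (metis surjD)
  then have "\<pi> (hom_comp deg w p) \<noteq> 0"
    using \<pi>_hom_comp y by simp
  then have "hom_comp deg w p \<noteq> 0"
    using ring_hom_fun_0[OF \<pi>_ring_hom] by auto
  then have "w \<in> weight_monoid (S_comp deg :: 'g \<Rightarrow> ('v, 'k) mpoly set)"
    unfolding weight_monoid_def using hom_comp_in_S_comp by blast
  then show "w \<in> range (mon_deg deg)" by (simp add: weight_monoid_S_comp)
qed

lemma \<pi>_var_in_component: "\<pi> (var_poly v) \<in> Rw (deg v)"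
  by (rule \<pi>_S_comp[OF var_poly_in_S_comp])

lemma \<pi>_var_nonzero: "\<pi> (var_poly v) \<noteq> 0"
  using kernel_in_sq_var_ideal var_minus_const_notin_sq_var_ideal[of v 0] by (auto simp: const_poly_def)

lemma deg_var_nonzero: "deg v \<noteq> 0"
proof
  assume "deg v = 0"
  then obtain c where "\<pi> (var_poly v) = alg c" using \<pi>_var_in_component[of v] component_0 by auto
  then have "\<pi> (var_poly v - const_poly c) = 0" by (simp add: ring_hom_fun_diff[OF \<pi>_ring_hom] \<pi>_const)
  then show False using kernel_in_sq_var_ideal var_minus_const_notin_sq_var_ideal by blast
qed

lemma deg_var_in_weight_monoid: "deg v \<in> weight_monoid Rw"
  using \<pi>_var_in_component[of v] \<pi>_var_nonzero[of v] unfolding weight_monoid_def by auto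

text \<open>The only use of the cone condition; it applies because the degrees of the variables are
  not torsion, which rests on the algebraic closedness of the ground field.\<close>

lemma mon_deg_eq_0_imp_eq_0:
  assumes "mon_deg deg m = 0"
  shows "m = 0"
proof (rule ccontr)
  assume "m \<noteq> 0"
  then obtain v where v: "Poly_Mapping.lookup m v \<noteq> 0"
    by (metis keys_eq_empty all_not_in_conv in_keys_iff)
  obtain xs :: "'v list" where xs: "distinct xs" "set xs = UNIV"
    using finite_distinct_list[of "UNIV :: 'v set"] by auto
  define ws where "ws = concat (map (\<lambda>u. replicate (Poly_Mapping.lookup m u) (deg u)) xs)"
  have "sum_list ws = sum_list (map (\<lambda>u. nmult (Poly_Mapping.lookup m u) (deg u)) xs)"
    unfolding ws_def by (induct xs) (simp_all add: nmult_def)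
  also have "\<dots> = mon_deg deg m"
    by (simp add: sum_list_distinct_conv_sum_set[OF xs(1)] xs(2) mon_deg_eq_sum_UNIV)
  finally have "torsion_elem (sum_list ws)"
    using assms unfolding torsion_elem_def by (intro exI[of _ 1]) simp
  moreover have "set ws \<subseteq> weight_monoid Rw"
    unfolding ws_def using deg_var_in_weight_monoid by auto
  ultimately have "\<forall>w\<in>set ws. torsion_elem w"
    using pointed unfolding pointed_grading_def cone_pointed_def by blast
  moreover have "deg v \<in> set ws" unfolding ws_def using v xs(2) by auto
  ultimately show False
    using torsion_degree_eq_0[OF \<pi>_var_in_component \<pi>_var_nonzero] deg_var_nonzero by blast
qed

text \<open>Minimality: every monomial of a relation has total degree at least 2, so each of its
  variables has degree strictly below that of the relation.\<close>

lemma kernel_var_deg_less: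
  assumes f: "\<pi> f = 0" "f \<in> S_comp deg w"
    and m: "m \<in> Poly_Mapping.keys f" and v: "Poly_Mapping.lookup m v \<noteq> 0"
  shows "deg_less deg TYPE('k) (deg v) w"
proof -
  define m' where "m' = m - Poly_Mapping.single v 1"
  have m_eq: "m = m' + Poly_Mapping.single v 1"
  proof (rule poly_mapping_eqI)
    fix k show "Poly_Mapping.lookup m k = Poly_Mapping.lookup (m' + Poly_Mapping.single v 1) k"
      using v by (cases "k = v") (auto simp: m'_def lookup_add lookup_minus lookup_single)
  qed
  have "2 \<le> total_deg m" using sq_var_ideal_total_deg[OF kernel_in_sq_var_ideal[OF f(1)] m] .
  then have "m' \<noteq> 0" using m_eq by (auto simp: total_deg_add total_deg_single)
  have "mon_deg deg m = w" using f(2) m by (simp add: S_comp_def)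
  moreover have "mon_deg deg m = mon_deg deg m' + deg v"
    using m_eq by (simp add: mon_deg_add mon_deg_single)
  ultimately have "w = mon_deg deg m' + deg v" by simp
  then show ?thesis
    using mon_deg_eq_0_imp_eq_0[of m'] \<open>m' \<noteq> 0\<close> by (auto simp: deg_less_iff)
qed

lemma graded_aut_mon_deg_range:
  assumes "graded_aut alg Rw \<phi> \<psi>"
  shows "\<psi> (mon_deg deg m) \<in> range (mon_deg deg)"
proof (rule additive_mon_deg_range[OF graded_aut_additive[OF assms]])
  fix v
  have \<phi>: "bij \<phi>" "ring_hom_fun \<phi>" "\<phi> ` Rw (deg v) = Rw (\<psi> (deg v))"
    using assms unfolding graded_aut_def by blast+
  then have "\<phi> (\<pi> (var_poly v)) \<in> Rw (\<psi> (deg v))"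
    using \<pi>_var_in_component by blast
  moreover have "\<phi> (\<pi> (var_poly v)) \<noteq> 0"
    using \<phi>(1,2) \<pi>_var_nonzero by (metis bij_is_inj injD ring_hom_fun_0)
  ultimately have "\<psi> (deg v) \<in> weight_monoid Rw" unfolding weight_monoid_def by auto
  then show "\<psi> (deg v) \<in> range (mon_deg deg)" using weight_monoid_subset_mon_deg_range by blast
qed

lemma graded_aut_deg_less:
  assumes "graded_aut alg Rw \<phi> \<psi>" "deg_less deg TYPE('k) w' w"
  shows "deg_less deg TYPE('k) (\<psi> w') (\<psi> w)"
proof -
  obtain m where "w - w' = mon_deg deg m" "w' \<noteq> w"
    using assms(2) unfolding deg_less_iff by blast
  moreover have "inj \<psi>"
    using assms(1) unfolding graded_aut_def by (blast dest: bij_is_inj)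
  ultimately have "\<psi> (w - w') \<in> range (mon_deg deg)" "\<psi> w' \<noteq> \<psi> w"
    using graded_aut_mon_deg_range[OF assms(1)] by (auto dest: injD)
  then show ?thesis
    by (simp add: deg_less_iff additive.diff[OF graded_aut_additive[OF assms(1)]])
qed

abbreviation relations :: "('v, 'k) mpoly set" where
  "relations \<equiv> {f. \<pi> f = 0}"

definition graded_lift :: "('r \<Rightarrow> 'r) \<Rightarrow> ('g \<Rightarrow> 'g) \<Rightarrow> (('v, 'k) mpoly \<Rightarrow> ('v, 'k) mpoly) \<Rightarrow> bool" where
  "graded_lift \<phi> \<psi> \<Phi> \<longleftrightarrow> ring_hom_fun \<Phi> \<and> (\<forall>c. \<Phi> (const_poly c) = const_poly c)
     \<and> (\<forall>w. \<Phi> ` S_comp deg w \<subseteq> S_comp deg (\<psi> w)) \<and> (\<forall>p. \<pi> (\<Phi> p) = \<phi> (\<pi> p))"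

lemma graded_lift_exists:
  assumes aut: "graded_aut alg Rw \<phi> \<psi>"
  obtains \<Phi> where "graded_lift \<phi> \<psi> \<Phi>"
proof
  have \<phi>: "ring_hom_fun \<phi>" "\<forall>c. \<phi> (alg c) = alg c" "\<forall>w. \<phi> ` Rw w = Rw (\<psi> w)"
    using aut unfolding graded_aut_def by blast+
  define F where "F v = hom_comp deg (\<psi> (deg v)) (inv \<pi> (\<phi> (\<pi> (var_poly v))))" for v
  have F_S_comp: "F v \<in> S_comp deg (\<psi> (deg v))" for v
    unfolding F_def by (rule hom_comp_in_S_comp)
  have \<pi>_F: "\<pi> (F v) = \<phi> (\<pi> (var_poly v))" for v
  proof -
    have "\<pi> (inv \<pi> (\<phi> (\<pi> (var_poly v)))) = \<phi> (\<pi> (var_poly v))"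
      using \<pi>_surj by (rule surj_f_inv_f)
    moreover have "\<phi> (\<pi> (var_poly v)) \<in> Rw (\<psi> (deg v))"
      using \<phi>(3) \<pi>_var_in_component by blast
    ultimately show ?thesis unfolding F_def using \<pi>_hom_comp by metis
  qed
  have "\<pi> (subst_mpoly F p) = \<phi> (\<pi> p)" for p
    using ring_hom_fun_mpoly_eqI[of "\<pi> \<circ> subst_mpoly F" "\<phi> \<circ> \<pi>"]
    by (simp add: ring_hom_fun_comp \<pi>_ring_hom ring_hom_fun_subst_mpoly \<phi>(1,2)
        subst_mpoly_const subst_mpoly_var \<pi>_const \<pi>_F)
  then show "graded_lift \<phi> \<psi> (subst_mpoly F)"
    unfolding graded_lift_def
    using ring_hom_fun_subst_mpoly subst_mpoly_const
      subst_mpoly_S_comp[OF graded_aut_additive[OF aut] F_S_comp] by blast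
qed

lemma graded_lift_comp:
  assumes "graded_lift \<phi> \<psi> \<Phi>" "graded_lift \<phi>' \<psi>' \<Phi>'"
  shows "graded_lift (\<phi>' \<circ> \<phi>) (\<psi>' \<circ> \<psi>) (\<Phi>' \<circ> \<Phi>)"
proof -
  have "(\<Phi>' \<circ> \<Phi>) ` S_comp deg w \<subseteq> S_comp deg ((\<psi>' \<circ> \<psi>) w)" for w
  proof -
    have "\<Phi> ` S_comp deg w \<subseteq> S_comp deg (\<psi> w)" "\<Phi>' ` S_comp deg (\<psi> w) \<subseteq> S_comp deg (\<psi>' (\<psi> w))"
      using assms unfolding graded_lift_def by blast+
    then show ?thesis by (auto simp: image_comp[symmetric])
  qed
  then show ?thesis
    using assms unfolding graded_lift_def by (simp add: ring_hom_fun_comp)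
qed

lemma graded_lift_ideal_below:
  assumes "graded_aut alg Rw \<phi> \<psi>" "graded_lift \<phi> \<psi> \<Phi>"
    and "q \<in> ideal_below deg relations u"
  shows "\<Phi> q \<in> ideal_below deg relations (\<psi> u)"
  using assms(3) unfolding ideal_below_def
proof (rule ring_hom_fun_image_ideal_gen[rotated 2])
  show "ring_hom_fun \<Phi>" using assms(2) unfolding graded_lift_def by blast
  show "\<Phi> ` (\<Union>w'\<in>{w'. deg_less deg TYPE('k) w' u}. relations \<inter> S_comp deg w')
      \<subseteq> (\<Union>w'\<in>{w'. deg_less deg TYPE('k) w' (\<psi> u)}. relations \<inter> S_comp deg w')"
  proof (rule image_subsetI)
    fix g assume "g \<in> (\<Union>w'\<in>{w'. deg_less deg TYPE('k) w' u}. relations \<inter> S_comp deg w')"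
    then obtain w' where g: "deg_less deg TYPE('k) w' u" "\<pi> g = 0" "g \<in> S_comp deg w'" by blast
    have "ring_hom_fun \<phi>" using assms(1) unfolding graded_aut_def by blast
    then have "\<pi> (\<Phi> g) = 0" using assms(2) g(2) by (simp add: graded_lift_def ring_hom_fun_0)
    moreover have "\<Phi> g \<in> S_comp deg (\<psi> w')" using assms(2) g(3) unfolding graded_lift_def by blast
    moreover have "deg_less deg TYPE('k) (\<psi> w') (\<psi> u)" by (rule graded_aut_deg_less[OF assms(1) g(1)])
    ultimately show "\<Phi> g \<in> (\<Union>w'\<in>{w'. deg_less deg TYPE('k) w' (\<psi> u)}. relations \<inter> S_comp deg w')"
      by blast
  qed
qed

lemma graded_lift_id_diff_ideal_below:
  assumes \<Theta>: "graded_lift id id \<Theta>" and f: "\<pi> f = 0" "f \<in> S_comp deg w"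
  shows "\<Theta> f - f \<in> ideal_below deg relations w"
  unfolding ideal_below_def
proof (rule ring_hom_fun_diff_mpoly[where V = "{v. deg_less deg TYPE('k) (deg v) w}"])
  show "ring_hom_fun \<Theta>" "\<Theta> (const_poly c) = const_poly c" for c
    using \<Theta> unfolding graded_lift_def by blast+
  show "\<Theta> (var_poly v) - var_poly v
      \<in> ideal_gen (\<Union>w'\<in>{w'. deg_less deg TYPE('k) w' w}. relations \<inter> S_comp deg w')"
    if "v \<in> {v. deg_less deg TYPE('k) (deg v) w}" for v
  proof (rule ideal_gen_generator)
    have "\<pi> (\<Theta> (var_poly v) - var_poly v) = 0"
      using \<Theta> by (simp add: graded_lift_def ring_hom_fun_diff[OF \<pi>_ring_hom])
    moreover have "\<Theta> (var_poly v) - var_poly v \<in> S_comp deg (deg v)"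
      using \<Theta> var_poly_in_S_comp unfolding graded_lift_def by (fastforce intro: S_comp_diff)
    ultimately show "\<Theta> (var_poly v) - var_poly v
        \<in> (\<Union>w'\<in>{w'. deg_less deg TYPE('k) w' w}. relations \<inter> S_comp deg w')"
      using that by blast
  qed
  show "\<forall>m\<in>Poly_Mapping.keys f. \<forall>v. Poly_Mapping.lookup m v \<noteq> 0
      \<longrightarrow> v \<in> {v. deg_less deg TYPE('k) (deg v) w}"
    using f kernel_var_deg_less by blast
qed

lemma graded_aut_gen_degrees:
  assumes aut: "graded_aut alg Rw \<phi> \<psi>" and w: "w \<in> gen_degrees deg relations"
  shows "\<psi> w \<in> gen_degrees deg relations"
proof (rule ccontr)
  assume "\<psi> w \<notin> gen_degrees deg relations"
  then have below: "relations \<inter> S_comp deg (\<psi> w) \<subseteq> ideal_below deg relations (\<psi> w)"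
    unfolding gen_degrees_def by simp
  have aut': "graded_aut alg Rw (inv \<phi>) (inv \<psi>)" by (rule graded_aut_inv[OF aut])
  obtain \<Phi> where \<Phi>: "graded_lift \<phi> \<psi> \<Phi>" using graded_lift_exists[OF aut] .
  obtain \<Phi>' where \<Phi>': "graded_lift (inv \<phi>) (inv \<psi>) \<Phi>'" using graded_lift_exists[OF aut'] .
  have "inv \<phi> \<circ> \<phi> = id" "inv \<psi> \<circ> \<psi> = id"
    using aut unfolding graded_aut_def by (auto intro: inv_o_cancel bij_is_inj)
  then have \<Theta>: "graded_lift id id (\<Phi>' \<circ> \<Phi>)"
    using graded_lift_comp[OF \<Phi> \<Phi>'] by simp
  have "relations \<inter> S_comp deg w \<subseteq> ideal_below deg relations w"
  proof
    fix f assume f: "f \<in> relations \<inter> S_comp deg w"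
    have "ring_hom_fun \<phi>" using aut unfolding graded_aut_def by blast
    then have "\<Phi> f \<in> relations \<inter> S_comp deg (\<psi> w)"
      using \<Phi> f unfolding graded_lift_def by (auto simp: ring_hom_fun_0)
    then have "\<Phi>' (\<Phi> f) \<in> ideal_below deg relations (inv \<psi> (\<psi> w))"
      using below graded_lift_ideal_below[OF aut' \<Phi>'] by blast
    then have "(\<Phi>' \<circ> \<Phi>) f \<in> ideal_below deg relations w"
      using aut unfolding graded_aut_def by (simp add: bij_is_inj)
    moreover have "(\<Phi>' \<circ> \<Phi>) f - f \<in> ideal_below deg relations w"
      using graded_lift_id_diff_ideal_below[OF \<Theta>] f by blast
    ultimately show "f \<in> ideal_below deg relations w"
      unfolding ideal_below_def using ideal_gen_diff by fastforce
  qed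
  then show False using w unfolding gen_degrees_def by simp
qed

end

theorem proposition2p6:
  fixes alg :: "'k::field_char_0 \<Rightarrow> 'r::idom"
    and Rw :: "'g::ab_group_add \<Rightarrow> 'r set"
    and deg :: "'v::finite \<Rightarrow> 'g"
    and \<pi> :: "('v, 'k) mpoly \<Rightarrow> 'r"
    and \<phi> :: "'r \<Rightarrow> 'r" and \<psi> :: "'g \<Rightarrow> 'g"
  assumes "alg_closed_field TYPE('k)"
    and "ring_hom_fun alg"
    and "fin_gen_algebra alg"
    and "fin_gen_group TYPE('g)"
    and "is_grading alg Rw"
    and "effective_grading Rw"
    and "pointed_grading alg Rw"
    and "minimal_presentation alg Rw deg \<pi>"
    and "graded_aut alg Rw \<phi> \<psi>"
  shows "\<psi> ` gen_degrees deg {f. \<pi> f = 0} = gen_degrees deg {f. \<pi> f = 0}"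
proof -
  interpret minimal_graded_presentation alg Rw deg \<pi>
    using assms by unfold_locales
  have aut: "graded_aut alg Rw \<phi> \<psi>" and aut': "graded_aut alg Rw (inv \<phi>) (inv \<psi>)"
    using assms(9) graded_aut_inv by blast+
  have "w \<in> \<psi> ` gen_degrees deg relations" if "w \<in> gen_degrees deg relations" for w
  proof
    show "w = \<psi> (inv \<psi> w)"
      using aut unfolding graded_aut_def by (simp add: bij_is_surj surj_f_inv_f)
    show "inv \<psi> w \<in> gen_degrees deg relations"
      by (rule graded_aut_gen_degrees[OF aut' that])
  qed
  then show ?thesis using graded_aut_gen_degrees[OF aut] by blast
qed

end
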